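(* Let $H$ be a separable complex Hilbert space, $\{v_j\}_{j\in\mathbb N}$ an orthonormal basis of $H$, $\{w_j\}_{j\in\mathbb N}$ a set of unit vectors in $H$, and $N\ge1$. Let $p_N'$ be the orthogonal projection onto $H_N'=\operatorname{span}\{v_1,\dots,v_N\}$, let $\tilde{\mathcal B}_N=\{p_N'(w_1),\dots,p_N'(w_N)\}\cup\{v_j\}_{j\ge N+1}$, and let $U_N'$ be the $N\times N$ matrix with entries $\langle p_N'(w_i),p_N'(w_j)\rangle$, $1\le i,j\le N$. Assume $\{p_N'(w_1),\dots,p_N'(w_N)\}$ is a basis of $H_N'$. Then $\tilde{\mathcal B}_N$ is a Riesz basis of $H$ with optimal frame constants $$\tilde B_N=\max_{\vec c\in\mathbb C^N,\ |\vec c|\le1}\big\{\langle U_N'\vec c,\vec c\rangle+1-|\vec c|^2\big\},\qquad \tilde A_N=\min_{\vec c\in\mathbb C^N,\ |\vec c|\le1}\big\{\langle U_N'\vec c,\vec c\rangle+1-|\vec c|^2\big\}.$$ Moreover, if $\Lambda_N$ and $\lambda_N$ denote the maximum and minimum eigenvalue of $U_N'$, then $\tilde B_N=\max\{\Lambda_N,1\}$ and $\tilde A_N=\lambda_N$.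
   Context: Here $|\vec c|$ is the Euclidean norm on $\mathbb C^N$. A Riesz basis is a sequence $\{u_j\}$ such that there are $0<A\le B<\infty$ with $A\|f\|^2\le\sum_j|\langle f,u_j\rangle|^2\le B\|f\|^2$ for all $f\in H$ and $A\sum|a_j|^2\le\|\sum a_ju_j\|^2\le B\sum|a_j|^2$ for all finite coefficient sequences; its optimal frame constants are the largest such $A$ and smallest such $B$. *)

theory Defs
  imports "HOL-Analysis.Infinite_Sum" "Jordan_Normal_Form.Char_Poly"
begin

text \<open>Convention: the inner product is linear in the first
  argument and conjugate-linear in the second.\<close>

class complex_vector = real_vector +
  fixes scaleC :: "complex \<Rightarrow> 'a \<Rightarrow> 'a" (infixr \<open>*\<^sub>C\<close> 75)
  assumes scaleC_add_right: "a *\<^sub>C (x + y) = a *\<^sub>C x + a *\<^sub>C y"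
    and scaleC_add_left: "(a + b) *\<^sub>C x = a *\<^sub>C x + b *\<^sub>C x"
    and scaleC_scaleC: "a *\<^sub>C (b *\<^sub>C x) = (a * b) *\<^sub>C x"
    and scaleC_one: "1 *\<^sub>C x = x"
    and scaleR_scaleC: "r *\<^sub>R x = complex_of_real r *\<^sub>C x"

class complex_inner = complex_vector + real_normed_vector +
  fixes cinner :: "'a \<Rightarrow> 'a \<Rightarrow> complex"
  assumes cinner_conj_commute: "cinner x y = cnj (cinner y x)"
    and cinner_add_left: "cinner (x + y) z = cinner x z + cinner y z"
    and cinner_scaleC_left: "cinner (a *\<^sub>C x) y = a * cinner x y"
    and cinner_Re_nonneg: "0 \<le> Re (cinner x x)"
    and cinner_eq_zero_iff: "cinner x x = 0 \<longleftrightarrow> x = 0"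
    and norm_eq_sqrt_cinner: "norm x = sqrt (Re (cinner x x))"

class chilbert_space = complex_inner + complete_space

definition cspan :: "'a::complex_vector set \<Rightarrow> 'a set" where
  "cspan S = {x. \<exists>F a. finite F \<and> F \<subseteq> S \<and> x = (\<Sum>s\<in>F. a s *\<^sub>C s)}"

definition orthonormal_basis :: "(nat \<Rightarrow> 'a::complex_inner) \<Rightarrow> bool" where
  "orthonormal_basis v \<longleftrightarrow>
     (\<forall>i j. cinner (v i) (v j) = (if i = j then 1 else 0)) \<and>
     closure (cspan (range v)) = UNIV"

definition orth_proj :: "'a::complex_inner set \<Rightarrow> 'a \<Rightarrow> 'a" where
  "orth_proj M x = (THE y. y \<in> M \<and> (\<forall>m\<in>M. cinner (x - y) m = 0))"

definition is_finite_basis_of :: "nat \<Rightarrow> (nat \<Rightarrow> 'a::complex_vector) \<Rightarrow> 'a set \<Rightarrow> bool" where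
  "is_finite_basis_of n x M \<longleftrightarrow>
     (\<forall>a. (\<Sum>i<n. a i *\<^sub>C x i) = 0 \<longrightarrow> (\<forall>i<n. a i = 0)) \<and>
     cspan (x ` {..<n}) = M"

definition riesz_bounds :: "(nat \<Rightarrow> 'a::complex_inner) \<Rightarrow> real \<Rightarrow> real \<Rightarrow> bool" where
  "riesz_bounds u A B \<longleftrightarrow> 0 < A \<and> A \<le> B \<and>
     (\<forall>f. (\<lambda>j. (cmod (cinner f (u j)))\<^sup>2) summable_on UNIV \<and>
          A * (norm f)\<^sup>2 \<le> (\<Sum>\<^sub>\<infinity>j. (cmod (cinner f (u j)))\<^sup>2) \<and>
          (\<Sum>\<^sub>\<infinity>j. (cmod (cinner f (u j)))\<^sup>2) \<le> B * (norm f)\<^sup>2) \<and>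
     (\<forall>F a. finite F \<longrightarrow>
          A * (\<Sum>j\<in>F. (cmod (a j))\<^sup>2) \<le> (norm (\<Sum>j\<in>F. a j *\<^sub>C u j))\<^sup>2 \<and>
          (norm (\<Sum>j\<in>F. a j *\<^sub>C u j))\<^sup>2 \<le> B * (\<Sum>j\<in>F. (cmod (a j))\<^sup>2))"

definition riesz_basis :: "(nat \<Rightarrow> 'a::complex_inner) \<Rightarrow> bool" where
  "riesz_basis u \<longleftrightarrow> (\<exists>A B. riesz_bounds u A B)"

definition optimal_lower_constant :: "(nat \<Rightarrow> 'a::complex_inner) \<Rightarrow> real \<Rightarrow> bool" where
  "optimal_lower_constant u A \<longleftrightarrow>
     (\<exists>B. riesz_bounds u A B) \<and> (\<forall>A' B'. riesz_bounds u A' B' \<longrightarrow> A' \<le> A)"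

definition optimal_upper_constant :: "(nat \<Rightarrow> 'a::complex_inner) \<Rightarrow> real \<Rightarrow> bool" where
  "optimal_upper_constant u B \<longleftrightarrow>
     (\<exists>A. riesz_bounds u A B) \<and> (\<forall>A' B'. riesz_bounds u A' B' \<longrightarrow> B \<le> B')"

end

(*
  Write x_i = p'_N(w_i) and T d = sum_{i<N} d_i x_i, so that |T d|^2 is the hermitian form of the
  Gram matrix U'_N. By compactness |T d|^2 / |d|^2 attains a minimum lambda and a maximum Lambda,
  and a first-variation argument shows that these are eigenvalues of U'_N bounding its spectrum.
  Since the x_i span H'_N and the v_j with j >= N are an orthonormal basis of its orthogonal
  complement, the synthesis and analysis sums of the new family split orthogonally into a part
  coming from the x_i and an isometric part; the first is controlled by lambda and Lambda directly
  for synthesis and by duality for analysis. As lambda <= |x_0|^2 <= 1, this gives the Riesz bounds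
  lambda and max {Lambda, 1}; they are attained on the extremal coefficient vectors and on v_N,
  hence optimal, and the same splitting shows that <U'_N c, c> + 1 - |c|^2 ranges over
  [lambda, max {Lambda, 1}] on the unit ball.
*)

theory Submission
  imports Defs "HOL-Analysis.Elementary_Metric_Spaces" "HOL-Analysis.Function_Topology"
    "HOL-Analysis.L2_Norm"
begin

section \<open>Complex inner product spaces\<close>

interpretation cvec: Modules.module "scaleC :: complex \<Rightarrow> 'a::complex_vector \<Rightarrow> 'a"
  by unfold_locales (simp_all add: scaleC_add_right scaleC_add_left scaleC_scaleC scaleC_one)

lemma cspan_eq_span: "cspan = cvec.span"
  by (auto simp: fun_eq_iff cspan_def cvec.span_explicit)

lemma cinner_add_right: "cinner x (y + z) = cinner x y + cinner x z"
  by (subst (1 2 3) cinner_conj_commute) (simp add: cinner_add_left)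

lemma cinner_scaleC_right: "cinner x (a *\<^sub>C y) = cnj a * cinner x y"
  by (subst (1 2) cinner_conj_commute) (simp add: cinner_scaleC_left)

lemma additive_cinner_left: "additive (\<lambda>x. cinner x y)"
  by (simp add: additive_def cinner_add_left)

lemma additive_cinner_right: "additive (\<lambda>y. cinner x y)"
  by (simp add: additive_def cinner_add_right)

lemmas cinner_zero_left [simp] = additive.zero[OF additive_cinner_left]
  and cinner_zero_right [simp] = additive.zero[OF additive_cinner_right]
  and cinner_diff_left = additive.diff[OF additive_cinner_left]
  and cinner_diff_right = additive.diff[OF additive_cinner_right]
  and cinner_sum_left = additive.sum[OF additive_cinner_left]
  and cinner_sum_right = additive.sum[OF additive_cinner_right]

lemma cinner_self: "cinner x x = complex_of_real ((norm x)\<^sup>2)"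
proof -
  have "Im (cinner x x) = 0"
    using arg_cong[OF cinner_conj_commute[of x x], of Im] by simp
  then show ?thesis
    by (simp add: complex_eq_iff norm_eq_sqrt_cinner cinner_Re_nonneg)
qed

lemma power2_norm_eq_cinner: "(norm x)\<^sup>2 = Re (cinner x x)"
  by (simp add: cinner_self)

lemma norm_scaleC:
  fixes x :: "'a::complex_inner"
  shows "norm (a *\<^sub>C x) = cmod a * norm x"
proof -
  have "cinner (a *\<^sub>C x) (a *\<^sub>C x) = a * cnj a * cinner x x"
    by (simp add: cinner_scaleC_left cinner_scaleC_right)
  also have "\<dots> = of_real ((cmod a * norm x)\<^sup>2)"
    by (simp only: cinner_self power_mult_distrib of_real_mult flip: complex_norm_square)
  finally have "(norm (a *\<^sub>C x))\<^sup>2 = (cmod a * norm x)\<^sup>2"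
    by (simp add: power2_norm_eq_cinner)
  then show ?thesis
    by simp
qed

lemma cinner_cauchy_schwarz: "cmod (cinner x y) \<le> norm x * norm y"
proof (cases "y = 0")
  case False
  define t where "t = cinner x y / cinner y y"
  have yy: "cinner y y = of_real ((norm y)\<^sup>2)" "norm y > 0"
    using False by (simp_all add: cinner_self)
  have "cinner (x - t *\<^sub>C y) y = 0"
    using yy by (simp add: cinner_diff_left cinner_scaleC_left t_def)
  then have "cinner (x - t *\<^sub>C y) (x - t *\<^sub>C y) = cinner (x - t *\<^sub>C y) x"
    by (simp add: cinner_diff_right cinner_scaleC_right)
  also have "\<dots> = cinner x x - t * cnj (cinner x y)"
    by (simp add: cinner_diff_left cinner_scaleC_left flip: cinner_conj_commute)
  also have "t * cnj (cinner x y) = of_real ((cmod (cinner x y))\<^sup>2 / (norm y)\<^sup>2)"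
    by (simp add: t_def yy complex_mult_cnj cmod_power2)
  finally have "0 \<le> (norm x)\<^sup>2 - (cmod (cinner x y))\<^sup>2 / (norm y)\<^sup>2"
    by (metis Re_complex_of_real cinner_Re_nonneg cinner_self of_real_diff)
  then have "(cmod (cinner x y))\<^sup>2 \<le> (norm x * norm y)\<^sup>2"
    using yy by (simp add: field_simps power_mult_distrib)
  then show ?thesis
    by (simp add: power2_le_iff_abs_le)
qed simp

lemma pythagoras:
  assumes "cinner x y = 0"
  shows "(norm (x + y))\<^sup>2 = (norm x)\<^sup>2 + (norm y)\<^sup>2"
proof -
  have "cinner y x = 0"
    using assms cinner_conj_commute[of y x] by simp
  with assms show ?thesis
    by (simp add: power2_norm_eq_cinner cinner_add_left cinner_add_right)
qed

lemma cinner_cspan_eq_0: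
  assumes "\<And>s. s \<in> S \<Longrightarrow> cinner z s = 0" and "m \<in> cspan S"
  shows "cinner z m = 0"
  using assms(2) unfolding cspan_eq_span
  by (induction rule: cvec.span_induct_alt)
    (simp_all add: assms(1) cinner_add_right cinner_scaleC_right)

lemma sum_scaleC_in_cspan: "(\<Sum>i\<in>K. e i *\<^sub>C x i) \<in> cspan (x ` K)"
  unfolding cspan_eq_span by (intro cvec.span_sum cvec.span_scale cvec.span_base) simp

lemma cspan_image_finiteE:
  assumes "g \<in> cspan (x ` K)" "finite K"
  obtains e where "g = (\<Sum>i\<in>K. e i *\<^sub>C x i)"
proof -
  from assms(1) have "\<exists>e. g = (\<Sum>i\<in>K. e i *\<^sub>C x i)"
    unfolding cspan_eq_span
  proof (induction rule: cvec.span_induct_alt)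
    case base
    show ?case
      by (intro exI[of _ "\<lambda>_. 0"]) simp
  next
    case (step c y h)
    then obtain k e where "k \<in> K" "y = x k" "h = (\<Sum>i\<in>K. e i *\<^sub>C x i)"
      by blast
    define e' where "e' i = e i + (if i = k then c else 0)" for i
    have "c *\<^sub>C y + h = (\<Sum>i\<in>K. e' i *\<^sub>C x i)"
      using assms(2) \<open>k \<in> K\<close> \<open>y = x k\<close> \<open>h = _\<close>
      by (simp add: e'_def scaleC_add_left sum.distrib if_distrib[of "\<lambda>a. a *\<^sub>C _"]
          cong: if_cong)
    then show ?case
      by blast
  qed
  then show ?thesis
    using that by blast
qed

lemma orth_proj_cspan_eqI:
  assumes y: "y \<in> cspan S" and orth: "\<And>m. m \<in> cspan S \<Longrightarrow> cinner (x - y) m = 0"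
  shows "orth_proj (cspan S) x = y"
  unfolding orth_proj_def
proof (rule the_equality)
  fix z
  assume z: "z \<in> cspan S \<and> (\<forall>m\<in>cspan S. cinner (x - z) m = 0)"
  then have "y - z \<in> cspan S"
    using y unfolding cspan_eq_span by (blast intro: cvec.span_diff)
  then have "cinner (y - z) (y - z) = 0"
    using orth z by (metis cinner_diff_left diff_diff_eq2 diff_self diff_zero)
  then show "z = y"
    by (simp add: cinner_eq_zero_iff)
qed (use assms in blast)

lemma norm_le_of_orthogonal_residual:
  assumes "y \<in> cspan S" "g \<in> cspan S" and orth: "\<And>m. m \<in> cspan S \<Longrightarrow> cinner (x - y) m = 0"
  shows "norm (x - y) \<le> norm (x - g)"
proof -
  have "y - g \<in> cspan S"
    using assms(1,2) unfolding cspan_eq_span by (rule cvec.span_diff)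
  then have "(norm ((x - y) + (y - g)))\<^sup>2 = (norm (x - y))\<^sup>2 + (norm (y - g))\<^sup>2"
    by (rule pythagoras[OF orth])
  then have "(norm (x - y))\<^sup>2 \<le> (norm (x - g))\<^sup>2"
    by simp
  then show ?thesis
    by (rule power2_le_imp_le) simp
qed

section \<open>Orthonormal systems\<close>

definition orthonormal :: "('i \<Rightarrow> 'a::complex_inner) \<Rightarrow> bool" where
  "orthonormal v \<longleftrightarrow> (\<forall>i j. cinner (v i) (v j) = (if i = j then 1 else 0))"

definition proj_span :: "('i \<Rightarrow> 'a::complex_inner) \<Rightarrow> 'i set \<Rightarrow> 'a \<Rightarrow> 'a" where
  "proj_span v K x = (\<Sum>k\<in>K. cinner x (v k) *\<^sub>C v k)"

lemma orthonormal_basis_iff: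
  "orthonormal_basis v \<longleftrightarrow> orthonormal v \<and> closure (cspan (range v)) = UNIV"
  by (simp add: orthonormal_basis_def orthonormal_def)

lemma cinner_sum_orthonormal:
  assumes "orthonormal v" "finite K"
  shows "cinner (\<Sum>k\<in>K. b k *\<^sub>C v k) (\<Sum>k\<in>K. c k *\<^sub>C v k) = (\<Sum>k\<in>K. b k * cnj (c k))"
proof -
  have "cinner (\<Sum>k\<in>K. b k *\<^sub>C v k) (\<Sum>k\<in>K. c k *\<^sub>C v k)
      = (\<Sum>j\<in>K. \<Sum>i\<in>K. if i = j then b i * cnj (c j) else 0)"
    using assms(1) unfolding orthonormal_def
    by (simp add: cinner_sum_left cinner_sum_right cinner_scaleC_left cinner_scaleC_right
        sum_distrib_left if_distrib[of "\<lambda>z. _ * z"] mult_ac cong: if_cong)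
  also have "\<dots> = (\<Sum>k\<in>K. b k * cnj (c k))"
    using assms(2) by simp
  finally show ?thesis .
qed

lemma cinner_sum_orthonormal_vector:
  assumes "orthonormal v" "finite K"
  shows "cinner (\<Sum>k\<in>K. b k *\<^sub>C v k) (v j) = (if j \<in> K then b j else 0)"
  using assms unfolding orthonormal_def
  by (simp add: cinner_sum_left cinner_scaleC_left if_distrib[of "\<lambda>z. _ * z"] cong: if_cong)

lemma norm_sum_orthonormal:
  assumes "orthonormal v" "finite K"
  shows "(norm (\<Sum>k\<in>K. b k *\<^sub>C v k))\<^sup>2 = (\<Sum>k\<in>K. (cmod (b k))\<^sup>2)"
  by (simp add: power2_norm_eq_cinner cinner_sum_orthonormal[OF assms] complex_mult_cnj cmod_power2)

lemma cinner_cspan_orthonormal_eq_0: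
  assumes "orthonormal v" "j \<notin> K" "m \<in> cspan (v ` K)"
  shows "cinner m (v j) = 0"
proof -
  have "cinner (v j) m = 0"
    using _ assms(3) by (rule cinner_cspan_eq_0) (use assms(1,2) in \<open>auto simp: orthonormal_def\<close>)
  then show ?thesis
    by (subst cinner_conj_commute) simp
qed

lemma proj_span_in_cspan: "proj_span v K x \<in> cspan (v ` K)"
  unfolding proj_span_def by (rule sum_scaleC_in_cspan)

lemma cinner_proj_span_residual:
  assumes "orthonormal v" "finite K" "m \<in> cspan (v ` K)"
  shows "cinner (x - proj_span v K x) m = 0"
  using _ assms(3) by (rule cinner_cspan_eq_0)
    (auto simp: proj_span_def cinner_diff_left cinner_sum_orthonormal_vector[OF assms(1,2)])

lemma orth_proj_cspan_orthonormal:
  assumes "orthonormal v" "finite K"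
  shows "orth_proj (cspan (v ` K)) = proj_span v K"
  by (intro ext orth_proj_cspan_eqI proj_span_in_cspan cinner_proj_span_residual[OF assms])

lemma norm_proj_span:
  assumes "orthonormal v" "finite K"
  shows "(norm (proj_span v K x))\<^sup>2 = (\<Sum>k\<in>K. (cmod (cinner x (v k)))\<^sup>2)"
  unfolding proj_span_def by (rule norm_sum_orthonormal[OF assms])

lemma norm_eq_residual_plus_proj_span:
  assumes "orthonormal v" "finite K"
  shows "(norm x)\<^sup>2 = (norm (x - proj_span v K x))\<^sup>2 + (norm (proj_span v K x))\<^sup>2"
proof -
  have "cinner (x - proj_span v K x) (proj_span v K x) = 0"
    by (rule cinner_proj_span_residual[OF assms proj_span_in_cspan])
  from pythagoras[OF this] show ?thesis
    by simp
qed

lemma bessel_inequality: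
  assumes "orthonormal v" "finite K"
  shows "(\<Sum>k\<in>K. (cmod (cinner x (v k)))\<^sup>2) \<le> (norm x)\<^sup>2"
  using norm_eq_residual_plus_proj_span[OF assms, of x] by (simp add: norm_proj_span[OF assms])

lemma norm_proj_span_le:
  assumes "orthonormal v" "finite K"
  shows "norm (proj_span v K x) \<le> norm x"
proof -
  have "(norm (proj_span v K x))\<^sup>2 \<le> (norm x)\<^sup>2"
    using norm_eq_residual_plus_proj_span[OF assms, of x] by simp
  then show ?thesis
    by (rule power2_le_imp_le) simp
qed

lemma cspan_range_finite_subset:
  assumes "g \<in> cspan (range v)"
  obtains K where "finite K" "g \<in> cspan (v ` K)"
proof -
  obtain F a where F: "finite F" "F \<subseteq> range v" "g = (\<Sum>s\<in>F. a s *\<^sub>C s)"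
    using assms unfolding cspan_def by blast
  then obtain K where "finite K" "F = v ` K"
    by (meson finite_subset_image)
  with F show ?thesis
    using that unfolding cspan_def by blast
qed

lemma parseval:
  assumes "orthonormal_basis v"
  shows "((\<lambda>j. (cmod (cinner f (v j)))\<^sup>2) has_sum (norm f)\<^sup>2) UNIV"
proof -
  let ?h = "\<lambda>j. (cmod (cinner f (v j)))\<^sup>2"
  have ons: "orthonormal v" and dense: "closure (cspan (range v)) = UNIV"
    using assms by (simp_all add: orthonormal_basis_iff)
  have sm: "?h summable_on UNIV"
    by (rule nonneg_bdd_above_summable_on)
      (auto intro!: bdd_aboveI[where M = "(norm f)\<^sup>2"] bessel_inequality[OF ons])
  have le: "infsum ?h UNIV \<le> (norm f)\<^sup>2"
    by (rule infsum_le_finite_sums[OF sm]) (rule bessel_inequality[OF ons])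
  have ge: "(norm f)\<^sup>2 - e\<^sup>2 \<le> infsum ?h UNIV" if "e > 0" for e
  proof -
    obtain g where g: "g \<in> cspan (range v)" "dist g f < e"
      using \<open>e > 0\<close> dense closure_approachable by blast
    obtain K where K: "finite K" "g \<in> cspan (v ` K)"
      using cspan_range_finite_subset[OF g(1)] by blast
    have "norm (f - proj_span v K f) \<le> norm (f - g)"
      by (intro norm_le_of_orthogonal_residual[OF proj_span_in_cspan K(2)]
          cinner_proj_span_residual[OF ons K(1)])
    also have "\<dots> < e"
      using g(2) by (simp add: dist_norm norm_minus_commute)
    finally have "(norm f)\<^sup>2 - e\<^sup>2 \<le> (norm (proj_span v K f))\<^sup>2"
      using norm_eq_residual_plus_proj_span[OF ons K(1), of f]
      by (smt (verit) norm_ge_zero power_strict_mono zero_less_numeral)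
    also have "\<dots> \<le> infsum ?h UNIV"
      unfolding norm_proj_span[OF ons K(1)] by (rule finite_sum_le_infsum[OF sm K(1)]) auto
    finally show ?thesis .
  qed
  have "(norm f)\<^sup>2 \<le> infsum ?h UNIV"
  proof (rule field_le_epsilon)
    fix d :: real
    assume "d > 0"
    then show "(norm f)\<^sup>2 \<le> infsum ?h UNIV + d"
      using ge[of "sqrt d"] by simp
  qed
  with le sm show ?thesis
    by (simp add: has_sum_iff)
qed

section \<open>Synthesis operator and Gram matrix of a finite family\<close>

definition synthesis :: "(nat \<Rightarrow> 'a::complex_vector) \<Rightarrow> nat \<Rightarrow> (nat \<Rightarrow> complex) \<Rightarrow> 'a" where
  "synthesis x n d = (\<Sum>i<n. d i *\<^sub>C x i)"

definition l2_sq :: "nat \<Rightarrow> (nat \<Rightarrow> complex) \<Rightarrow> real" where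
  "l2_sq n d = (\<Sum>i<n. (cmod (d i))\<^sup>2)"

definition gram_mat :: "(nat \<Rightarrow> 'a::complex_inner) \<Rightarrow> nat \<Rightarrow> complex mat" where
  "gram_mat x n = mat n n (\<lambda>(i, j). cinner (x i) (x j))"

lemma synthesis_cong: "(\<And>i. i < n \<Longrightarrow> d i = e i) \<Longrightarrow> synthesis x n d = synthesis x n e"
  unfolding synthesis_def by (rule sum.cong) auto

lemma l2_sq_cong: "(\<And>i. i < n \<Longrightarrow> d i = e i) \<Longrightarrow> l2_sq n d = l2_sq n e"
  unfolding l2_sq_def by (rule sum.cong) auto

lemma l2_sq_nonneg: "0 \<le> l2_sq n d"
  unfolding l2_sq_def by (simp add: sum_nonneg)

lemma l2_sq_eq_0_iff: "l2_sq n d = 0 \<longleftrightarrow> (\<forall>i<n. d i = 0)"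
  unfolding l2_sq_def by (subst sum_nonneg_eq_0_iff) auto

lemma synthesis_delta: "k < n \<Longrightarrow> synthesis x n (\<lambda>i. if i = k then 1 else 0) = x k"
  unfolding synthesis_def by (simp add: if_distrib[of "\<lambda>z. z *\<^sub>C _"] cong: if_cong)

lemma l2_sq_delta: "k < n \<Longrightarrow> l2_sq n (\<lambda>i. if i = k then 1 else 0) = 1"
  unfolding l2_sq_def by (simp add: if_distrib[of "\<lambda>z. (cmod z)\<^sup>2"] cong: if_cong)

lemma synthesis_in_cspan: "(\<And>i. i < n \<Longrightarrow> x i \<in> cspan S) \<Longrightarrow> synthesis x n d \<in> cspan S"
  unfolding synthesis_def cspan_eq_span by (intro cvec.span_sum cvec.span_scale) simp

lemma synthesis_lower_bound_le_power2_norm: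
  assumes "\<And>d. m * l2_sq n d \<le> (norm (synthesis x n d))\<^sup>2" and "k < n"
  shows "m \<le> (norm (x k))\<^sup>2"
  using assms(1)[of "\<lambda>i. if i = k then 1 else 0"] assms(2)
  by (simp add: synthesis_delta l2_sq_delta)

lemma synthesis_add_scale:
  "synthesis x n (\<lambda>i. d i + t * e i) = synthesis x n d + t *\<^sub>C synthesis x n e"
  unfolding synthesis_def by (simp add: scaleC_add_left cvec.scale_sum_right sum.distrib)

lemma synthesis_scale: "synthesis x n (\<lambda>i. t * d i) = t *\<^sub>C synthesis x n d"
  unfolding synthesis_def by (simp add: cvec.scale_sum_right)

lemma l2_sq_scale: "l2_sq n (\<lambda>i. c * d i) = (cmod c)\<^sup>2 * l2_sq n d"
  unfolding l2_sq_def by (simp add: norm_mult power_mult_distrib sum_distrib_left)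

lemma cinner_synthesis_left: "cinner (synthesis x n d) g = (\<Sum>i<n. d i * cinner (x i) g)"
  unfolding synthesis_def by (simp add: cinner_sum_left cinner_scaleC_left)

lemma cinner_synthesis:
  "cinner (synthesis x n d) (synthesis x n e) =
     (\<Sum>i<n. \<Sum>j<n. d i * cnj (e j) * cinner (x i) (x j))"
  unfolding synthesis_def
  by (simp add: cinner_sum_left cinner_sum_right cinner_scaleC_left cinner_scaleC_right
      sum_distrib_left mult.assoc; subst sum.swap; simp add: mult_ac)

lemma l2_sq_add_scale:
  "l2_sq n (\<lambda>i. d i + of_real t * e i) =
     l2_sq n d + 2 * t * Re (\<Sum>i<n. d i * cnj (e i)) + t\<^sup>2 * l2_sq n e"
proof -
  have expand: "(cmod (a + of_real t * b))\<^sup>2 = (cmod a)\<^sup>2 + 2 * t * Re (a * cnj b) + t\<^sup>2 * (cmod b)\<^sup>2"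
    for a b :: complex
    unfolding cmod_power2 by (simp add: power2_eq_square algebra_simps)
  show ?thesis
    unfolding l2_sq_def expand sum.distrib Re_sum sum_distrib_left by (rule refl)
qed

lemma power2_norm_add_scaleC_real:
  "(norm (a + of_real t *\<^sub>C b))\<^sup>2 = (norm a)\<^sup>2 + 2 * t * Re (cinner a b) + t\<^sup>2 * (norm b)\<^sup>2"
proof -
  have "cinner (a + of_real t *\<^sub>C b) (a + of_real t *\<^sub>C b) =
      cinner a a + of_real t * (cinner a b + cinner b a) + of_real (t\<^sup>2) * cinner b b"
    by (simp add: cinner_add_left cinner_add_right cinner_scaleC_left cinner_scaleC_right
        power2_eq_square algebra_simps)
  moreover have "Re (cinner b a) = Re (cinner a b)"
    by (subst cinner_conj_commute) simp
  ultimately show ?thesis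
    by (simp add: power2_norm_eq_cinner)
qed

lemma real_linear_quadratic_nonneg_imp_0:
  fixes a b :: real
  assumes "\<And>t. 0 \<le> a * t + b * t\<^sup>2"
  shows "a = 0"
proof (rule ccontr)
  assume "a \<noteq> 0"
  define c where "c = \<bar>b\<bar> + 1"
  have c: "c > 0" "b \<le> c"
    unfolding c_def by auto
  define t where "t = - a / (2 * c)"
  have "a * t + b * t\<^sup>2 \<le> a * t + c * t\<^sup>2"
    using c by (intro add_left_mono mult_right_mono) auto
  also have "\<dots> = - a\<^sup>2 / (4 * c)"
    using c unfolding t_def by (simp add: field_simps power2_eq_square)
  also have "\<dots> < 0"
    using \<open>a \<noteq> 0\<close> c by simp
  finally show False
    using assms[of t] by simp
qed

text \<open>First variation at an extremal d0 (s = 1 at a minimum, s = -1 at a maximum): moving along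
  real lines d0 + t e forces the real part of the hermitian form below to vanish, and replacing
  e by i e gives the imaginary part.\<close>

lemma synthesis_critical_point:
  fixes x :: "nat \<Rightarrow> 'a::complex_inner" and s m :: real
  assumes "s \<noteq> 0" and ext: "\<And>d. 0 \<le> s * ((norm (synthesis x n d))\<^sup>2 - m * l2_sq n d)"
    and d0: "(norm (synthesis x n d0))\<^sup>2 = m * l2_sq n d0"
  shows "cinner (synthesis x n d0) (synthesis x n e) = of_real m * (\<Sum>i<n. d0 i * cnj (e i))"
proof -
  define B where
    "B e = cinner (synthesis x n d0) (synthesis x n e) - of_real m * (\<Sum>i<n. d0 i * cnj (e i))"
    for e
  have Re_B: "Re (B e) = 0" for e
  proof -
    have "0 \<le> (2 * s * Re (B e)) * t + (s * ((norm (synthesis x n e))\<^sup>2 - m * l2_sq n e)) * t\<^sup>2"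
      for t
      using ext[of "\<lambda>i. d0 i + of_real t * e i"] d0
      by (simp add: synthesis_add_scale power2_norm_add_scaleC_real l2_sq_add_scale B_def
          algebra_simps)
    from real_linear_quadratic_nonneg_imp_0[OF this] show ?thesis
      using \<open>s \<noteq> 0\<close> by simp
  qed
  have "B (\<lambda>i. \<i> * e i) = - \<i> * B e"
    by (simp add: B_def synthesis_scale cinner_scaleC_right sum_distrib_left algebra_simps)
  then have "Im (B e) = 0"
    using Re_B[of "\<lambda>i. \<i> * e i"] by simp
  with Re_B[of e] show ?thesis
    by (simp add: B_def complex_eq_iff)
qed

lemma gram_mat_cscalar_prod:
  assumes "c \<in> carrier_vec n"
  shows "(gram_mat x n *\<^sub>v c) \<bullet>c c =
    cinner (synthesis x n (\<lambda>i. cnj (c $ i))) (synthesis x n (\<lambda>i. cnj (c $ i)))"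
proof -
  have "(gram_mat x n *\<^sub>v c) \<bullet>c c = (\<Sum>i<n. (\<Sum>j<n. cinner (x i) (x j) * c $ j) * cnj (c $ i))"
    using assms by (simp add: gram_mat_def scalar_prod_def atLeast0LessThan)
  then show ?thesis
    by (simp add: cinner_synthesis sum_distrib_left sum_distrib_right mult_ac)
qed

lemma cscalar_prod_self:
  assumes "c \<in> carrier_vec n"
  shows "c \<bullet>c c = of_real (l2_sq n (\<lambda>i. cnj (c $ i)))"
  using assms by (simp add: scalar_prod_def atLeast0LessThan l2_sq_def complex_mult_cnj cmod_power2)

lemma gram_mat_eigenvalue_bounds:
  assumes "eigenvalue (gram_mat x n) \<mu>"
    and lo: "\<And>d. m * l2_sq n d \<le> (norm (synthesis x n d))\<^sup>2"
    and hi: "\<And>d. (norm (synthesis x n d))\<^sup>2 \<le> M * l2_sq n d"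
  shows "\<mu> \<in> \<real> \<and> m \<le> Re \<mu> \<and> Re \<mu> \<le> M"
proof -
  obtain c where c: "c \<in> carrier_vec n" "c \<noteq> 0\<^sub>v n" "gram_mat x n *\<^sub>v c = \<mu> \<cdot>\<^sub>v c"
    using assms(1) by (auto simp: eigenvalue_def eigenvector_def gram_mat_def)
  define d where "d = (\<lambda>i. cnj (c $ i))"
  have "l2_sq n d \<noteq> 0"
    using c(1,2) by (auto simp: l2_sq_eq_0_iff d_def)
  then have pos: "l2_sq n d > 0"
    using l2_sq_nonneg[of n d] by linarith
  have "(gram_mat x n *\<^sub>v c) \<bullet>c c = \<mu> * (c \<bullet>c c)"
    using c(1) by (simp add: c(3))
  then have "of_real ((norm (synthesis x n d))\<^sup>2) = \<mu> * of_real (l2_sq n d)"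
    by (simp add: gram_mat_cscalar_prod[OF c(1)] cscalar_prod_self[OF c(1)] cinner_self d_def)
  then have \<mu>: "\<mu> = of_real ((norm (synthesis x n d))\<^sup>2 / l2_sq n d)"
    using pos by (simp add: field_simps)
  show ?thesis
    using lo[of d] hi[of d] pos by (simp add: \<mu> field_simps)
qed

lemma gram_mat_eigenvalue_of_critical_point:
  assumes crit: "\<And>e. cinner (synthesis x n d0) (synthesis x n e) =
      of_real m * (\<Sum>i<n. d0 i * cnj (e i))"
    and "l2_sq n d0 \<noteq> 0"
  shows "eigenvalue (gram_mat x n) (of_real m)"
proof -
  define c where "c = vec n (\<lambda>i. cnj (d0 i))"
  have "(gram_mat x n *\<^sub>v c) $ k = of_real m * c $ k" if "k < n" for k
  proof -
    have "(\<Sum>i<n. d0 i * cnj (if i = k then 1 else 0)) = d0 k"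
      using that by (simp add: if_distrib cong: if_cong)
    then have "cinner (synthesis x n d0) (x k) = of_real m * d0 k"
      using crit[of "\<lambda>i. if i = k then 1 else 0"] by (simp add: synthesis_delta[OF that])
    moreover have "(gram_mat x n *\<^sub>v c) $ k = cnj (cinner (synthesis x n d0) (x k))"
      using that by (simp add: gram_mat_def c_def scalar_prod_def atLeast0LessThan mult.commute
          cinner_synthesis_left flip: cinner_conj_commute)
    ultimately show ?thesis
      using that by (simp add: c_def)
  qed
  then have "gram_mat x n *\<^sub>v c = of_real m \<cdot>\<^sub>v c"
    by (intro eq_vecI) (simp_all add: gram_mat_def c_def)
  moreover have "c \<noteq> 0\<^sub>v n"
  proof
    assume "c = 0\<^sub>v n"
    then have "\<forall>i<n. d0 i = 0"
      by (metis c_def complex_cnj_zero_iff index_vec index_zero_vec(1))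
    with assms(2) show False
      by (simp add: l2_sq_eq_0_iff)
  qed
  ultimately show ?thesis
    unfolding eigenvalue_def eigenvector_def by (intro exI[of _ c]) (simp add: gram_mat_def c_def)
qed

lemma normalized_coefficients:
  fixes x :: "nat \<Rightarrow> 'a::complex_inner"
  assumes "l2_sq n d > 0"
  defines "d' \<equiv> \<lambda>i. if i < n then of_real (1 / sqrt (l2_sq n d)) * d i else 0"
  shows "l2_sq n d' = 1"
    and "(norm (synthesis x n d))\<^sup>2 = (norm (synthesis x n d'))\<^sup>2 * l2_sq n d"
    and "d' \<in> PiE UNIV (\<lambda>i. if i < n then cball 0 1 else {0})"
proof -
  let ?r = "sqrt (l2_sq n d)"
  have r: "?r\<^sup>2 = l2_sq n d" "?r > 0"
    using assms(1) by simp_all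
  have d': "l2_sq n d' = l2_sq n (\<lambda>i. of_real (1 / ?r) * d i)"
    "synthesis x n d' = synthesis x n (\<lambda>i. of_real (1 / ?r) * d i)"
    by (auto intro!: l2_sq_cong synthesis_cong simp: d'_def)
  show l2: "l2_sq n d' = 1"
    unfolding d' l2_sq_scale norm_of_real using r by (simp add: power_divide)
  show "(norm (synthesis x n d))\<^sup>2 = (norm (synthesis x n d'))\<^sup>2 * l2_sq n d"
    unfolding d' synthesis_scale norm_scaleC norm_of_real using r assms(1)
    by (simp add: power_mult_distrib power_divide)
  have "cmod (d' i) \<le> 1" if "i < n" for i
  proof -
    have "(cmod (d' i))\<^sup>2 \<le> l2_sq n d'"
      unfolding l2_sq_def using that by (intro member_le_sum) auto
    then have "(cmod (d' i))\<^sup>2 \<le> 1\<^sup>2"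
      using l2 by simp
    then show ?thesis
      by (rule power2_le_imp_le) simp
  qed
  then show "d' \<in> PiE UNIV (\<lambda>i. if i < n then cball 0 1 else {0})"
    by (auto simp: PiE_def d'_def)
qed

lemma continuous_on_coordinate [continuous_intros]:
  "continuous_on S (\<lambda>d::'i \<Rightarrow> 'b::topological_space. d i)"
  by (rule continuous_on_subset[OF continuous_on_product_coordinates]) simp

lemma continuous_on_power2_norm_synthesis:
  fixes x :: "nat \<Rightarrow> 'a::complex_inner"
  shows "continuous_on S (\<lambda>d. (norm (synthesis x n d))\<^sup>2)"
  unfolding power2_norm_eq_cinner cinner_synthesis by (intro continuous_intros)

lemma continuous_on_l2_sq: "continuous_on S (l2_sq n)"
  unfolding l2_sq_def[abs_def] by (intro continuous_intros)

lemma compact_cball_complex: "compact (cball (0::complex) r)"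
proof -
  let ?f = "\<lambda>p::real \<times> real. Complex (fst p) (snd p)"
  have f: "?f = (\<lambda>p. of_real (fst p) + \<i> * of_real (snd p))"
    by (auto simp: complex_eq_iff)
  have "continuous_on (cball 0 r) ?f"
    unfolding f by (intro continuous_intros)
  moreover have "cball (0::complex) r = ?f ` cball 0 r"
  proof (intro equalityI subsetI)
    fix z :: complex
    assume "z \<in> cball 0 r"
    then show "z \<in> ?f ` cball 0 r"
      by (intro image_eqI[of _ _ "(Re z, Im z)"]) (simp_all add: norm_Pair cmod_def)
  qed (auto simp: norm_Pair complex_norm)
  ultimately show ?thesis
    by (metis compact_cball compact_continuous_image)
qed

lemma exists_extremal_unit_coefficients:
  fixes x :: "nat \<Rightarrow> 'a::complex_inner"
  assumes "n \<ge> 1"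
  obtains d0 d1 where "l2_sq n d0 = 1" "l2_sq n d1 = 1"
    "\<And>d. (norm (synthesis x n d0))\<^sup>2 * l2_sq n d \<le> (norm (synthesis x n d))\<^sup>2"
    "\<And>d. (norm (synthesis x n d))\<^sup>2 \<le> (norm (synthesis x n d1))\<^sup>2 * l2_sq n d"
proof -
  let ?q = "\<lambda>d. (norm (synthesis x n d))\<^sup>2"
  define Sph where
    "Sph = PiE UNIV (\<lambda>i. if i < n then cball (0::complex) 1 else {0}) \<inter> {d. l2_sq n d = 1}"
  have "compactin (product_topology (\<lambda>i. euclidean) UNIV)
      (PiE UNIV (\<lambda>i. if i < n then cball (0::complex) 1 else {0}))"
    unfolding compactin_PiE by (auto simp: compact_cball_complex)
  then have "compact Sph"
    unfolding Sph_def euclidean_product_topology compactin_euclidean_iff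
    by (intro compact_Int_closed closed_Collect_eq continuous_on_l2_sq continuous_on_const)
  moreover have "(\<lambda>i. if i = 0 then 1 else 0) \<in> Sph"
    using assms by (auto simp: Sph_def l2_sq_delta PiE_def)
  then have "Sph \<noteq> {}"
    by blast
  ultimately obtain d0 d1 where d0: "d0 \<in> Sph" "\<And>d. d \<in> Sph \<Longrightarrow> ?q d0 \<le> ?q d"
    and d1: "d1 \<in> Sph" "\<And>d. d \<in> Sph \<Longrightarrow> ?q d \<le> ?q d1"
    using continuous_attains_inf continuous_attains_sup continuous_on_power2_norm_synthesis
    by metis
  have rescale: "\<exists>d'\<in>Sph. ?q d = ?q d' * l2_sq n d" for d
  proof (cases "l2_sq n d = 0")
    case True
    then have "synthesis x n d = synthesis x n (\<lambda>_. 0)"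
      by (intro synthesis_cong) (simp add: l2_sq_eq_0_iff)
    with True d0(1) show ?thesis
      by (auto simp: synthesis_def)
  next
    case False
    then have "l2_sq n d > 0"
      using l2_sq_nonneg[of n d] by linarith
    from normalized_coefficients[OF this] show ?thesis
      unfolding Sph_def by blast
  qed
  show ?thesis
  proof (rule that)
    fix d
    obtain d' where d': "d' \<in> Sph" "?q d = ?q d' * l2_sq n d"
      using rescale by blast
    have "?q d0 * l2_sq n d \<le> ?q d' * l2_sq n d"
      by (rule mult_right_mono[OF d0(2)[OF d'(1)] l2_sq_nonneg])
    then show "?q d0 * l2_sq n d \<le> ?q d"
      using d'(2) by simp
    have "?q d' * l2_sq n d \<le> ?q d1 * l2_sq n d"
      by (rule mult_right_mono[OF d1(2)[OF d'(1)] l2_sq_nonneg])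
    then show "?q d \<le> ?q d1 * l2_sq n d"
      using d'(2) by simp
  qed (use d0(1) d1(1) in \<open>simp_all add: Sph_def\<close>)
qed

lemma gram_mat_rayleigh_ritz:
  fixes x :: "nat \<Rightarrow> 'a::complex_inner"
  assumes "n \<ge> 1"
  obtains m M d0 d1 where
    "l2_sq n d0 = 1" "(norm (synthesis x n d0))\<^sup>2 = m"
    "l2_sq n d1 = 1" "(norm (synthesis x n d1))\<^sup>2 = M"
    "\<And>d. m * l2_sq n d \<le> (norm (synthesis x n d))\<^sup>2"
    "\<And>d. (norm (synthesis x n d))\<^sup>2 \<le> M * l2_sq n d"
    "eigenvalue (gram_mat x n) (of_real m)" "eigenvalue (gram_mat x n) (of_real M)"
    "\<And>\<mu>. eigenvalue (gram_mat x n) \<mu> \<Longrightarrow> \<mu> \<in> \<real> \<and> m \<le> Re \<mu> \<and> Re \<mu> \<le> M"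
proof -
  obtain d0 d1 where d: "l2_sq n d0 = 1" "l2_sq n d1 = 1"
    and lo: "\<And>d. (norm (synthesis x n d0))\<^sup>2 * l2_sq n d \<le> (norm (synthesis x n d))\<^sup>2"
    and hi: "\<And>d. (norm (synthesis x n d))\<^sup>2 \<le> (norm (synthesis x n d1))\<^sup>2 * l2_sq n d"
    using exists_extremal_unit_coefficients[OF assms] by blast
  have crit0: "cinner (synthesis x n d0) (synthesis x n e) =
      of_real ((norm (synthesis x n d0))\<^sup>2) * (\<Sum>i<n. d0 i * cnj (e i))" for e
    by (rule synthesis_critical_point[of 1]) (use lo d in simp_all)
  have crit1: "cinner (synthesis x n d1) (synthesis x n e) =
      of_real ((norm (synthesis x n d1))\<^sup>2) * (\<Sum>i<n. d1 i * cnj (e i))" for e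
    by (rule synthesis_critical_point[of "-1"]) (use hi d in simp_all)
  have "eigenvalue (gram_mat x n) (of_real ((norm (synthesis x n d0))\<^sup>2))"
    by (rule gram_mat_eigenvalue_of_critical_point[OF crit0]) (simp add: d)
  moreover have "eigenvalue (gram_mat x n) (of_real ((norm (synthesis x n d1))\<^sup>2))"
    by (rule gram_mat_eigenvalue_of_critical_point[OF crit1]) (simp add: d)
  ultimately show ?thesis
    using that[OF d(1) refl d(2) refl lo hi] gram_mat_eigenvalue_bounds[OF _ lo hi] by blast
qed

lemma cmod_sum_mult_cnj_le: "cmod (\<Sum>i<n. e i * cnj (d i)) \<le> sqrt (l2_sq n e) * sqrt (l2_sq n d)"
proof -
  have "cmod (\<Sum>i<n. e i * cnj (d i)) \<le> (\<Sum>i<n. \<bar>cmod (e i)\<bar> * \<bar>cmod (d i)\<bar>)"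
    by (rule order_trans[OF norm_sum]) (simp add: norm_mult)
  also have "\<dots> \<le> L2_set (\<lambda>i. cmod (e i)) {..<n} * L2_set (\<lambda>i. cmod (d i)) {..<n}"
    by (rule L2_set_mult_ineq)
  finally show ?thesis
    by (simp add: L2_set_def l2_sq_def)
qed

lemma l2_sq_analysis_le:
  assumes hi: "\<And>d. (norm (synthesis x n d))\<^sup>2 \<le> M * l2_sq n d" and "0 \<le> M"
  shows "l2_sq n (\<lambda>j. cinner g (x j)) \<le> M * (norm g)\<^sup>2"
proof -
  define d where "d j = cinner g (x j)" for j
  have "cinner (x j) g = cnj (d j)" for j
    by (simp add: d_def flip: cinner_conj_commute)
  then have "cinner (synthesis x n d) g = of_real (l2_sq n d)"
    by (simp add: cinner_synthesis_left l2_sq_def complex_mult_cnj cmod_power2)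
  then have "l2_sq n d \<le> norm (synthesis x n d) * norm g"
    using cinner_cauchy_schwarz[of "synthesis x n d" g] l2_sq_nonneg[of n d] by simp
  then have "(l2_sq n d)\<^sup>2 \<le> (norm (synthesis x n d))\<^sup>2 * (norm g)\<^sup>2"
    using l2_sq_nonneg[of n d] by (metis power_mono power_mult_distrib)
  also have "\<dots> \<le> M * l2_sq n d * (norm g)\<^sup>2"
    by (rule mult_right_mono[OF hi]) simp
  finally have "l2_sq n d * l2_sq n d \<le> l2_sq n d * (M * (norm g)\<^sup>2)"
    by (simp add: power2_eq_square mult_ac)
  then show ?thesis
    using l2_sq_nonneg[of n d] \<open>0 \<le> M\<close> unfolding d_def[symmetric]
    by (cases "l2_sq n d = 0") (simp_all add: mult_le_cancel_left)
qed

text \<open>Duality: for g = T e the squared norm of g is the pairing of e with the analysis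
  coefficients of g, and m times the squared norm of e is at most the squared norm of g.\<close>

lemma l2_sq_analysis_ge:
  assumes lo: "\<And>d. m * l2_sq n d \<le> (norm (synthesis x n d))\<^sup>2" and "0 < m"
    and "g \<in> cspan (x ` {..<n})"
  shows "m * (norm g)\<^sup>2 \<le> l2_sq n (\<lambda>j. cinner g (x j))"
proof -
  obtain e where g: "g = synthesis x n e"
    using cspan_image_finiteE[OF assms(3)] by (auto simp: synthesis_def)
  define d where "d j = cinner g (x j)" for j
  define a where "a = (norm g)\<^sup>2"
  have "a = cmod (cinner g g)"
    by (simp add: a_def cinner_self norm_power)
  also have "cinner g g = (\<Sum>j<n. e j * cnj (d j))"
    by (subst (1) g) (simp add: cinner_synthesis_left d_def flip: cinner_conj_commute)
  finally have "a \<le> sqrt (l2_sq n e) * sqrt (l2_sq n d)"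
    using cmod_sum_mult_cnj_le[of e d n] by simp
  then have "a\<^sup>2 \<le> l2_sq n e * l2_sq n d"
    by (metis a_def l2_sq_nonneg power_mono power_mult_distrib real_sqrt_pow2 zero_le_power2)
  moreover have "m * l2_sq n e \<le> a"
    using lo[of e] g by (simp add: a_def)
  ultimately have "m * a * a \<le> a * l2_sq n d"
    using \<open>0 < m\<close> l2_sq_nonneg[of n d]
    by (smt (verit) mult_left_mono mult_right_mono power2_eq_square mult.assoc mult.commute)
  then show ?thesis
    unfolding d_def[symmetric] a_def[symmetric]
    by (cases "a = 0") (simp_all add: a_def mult_le_cancel_left l2_sq_nonneg)
qed

section \<open>Completing a finite family by an orthonormal basis\<close>

lemma frame_bounds_add_isometric:
  fixes m M X Y t :: real
  assumes "m * X \<le> Y" "Y \<le> M * X" "0 \<le> X" "0 \<le> t" "0 \<le> m" "m \<le> 1"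
  shows "m * (X + t) \<le> Y + t" and "Y + t \<le> max M 1 * (X + t)"
proof -
  have "m * t \<le> t"
    using assms(4-6) by (rule mult_left_le_one_le)
  then show "m * (X + t) \<le> Y + t"
    using assms(1) by (simp add: distrib_left)
  have "M * X \<le> max M 1 * X" "1 * t \<le> max M 1 * t"
    using assms(3,4) by (intro mult_right_mono; simp)+
  then show "Y + t \<le> max M 1 * (X + t)"
    using assms(2) by (simp add: distrib_left)
qed

lemma norm_sum_completed_family:
  fixes v x :: "nat \<Rightarrow> 'a::complex_inner"
  assumes ons: "orthonormal v" and x: "\<And>i. i < N \<Longrightarrow> x i \<in> cspan (v ` {..<N})"
    and "finite F"
  shows "(norm (\<Sum>j\<in>F. a j *\<^sub>C (if j < N then x j else v j)))\<^sup>2 =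
    (norm (synthesis x N (\<lambda>j. if j \<in> F then a j else 0)))\<^sup>2 + (\<Sum>j\<in>F - {..<N}. (cmod (a j))\<^sup>2)"
proof -
  let ?a = "\<lambda>j. if j \<in> F then a j else 0"
  have "(\<Sum>j\<in>F \<inter> {..<N}. a j *\<^sub>C (if j < N then x j else v j)) = (\<Sum>j\<in>{..<N} \<inter> F. a j *\<^sub>C x j)"
    by (rule sum.cong) auto
  also have "\<dots> = synthesis x N ?a"
    by (simp add: sum.inter_restrict synthesis_def if_distrib[of "\<lambda>z. z *\<^sub>C _"] cong: if_cong)
  finally have "(\<Sum>j\<in>F. a j *\<^sub>C (if j < N then x j else v j)) =
      synthesis x N ?a + (\<Sum>j\<in>F - {..<N}. a j *\<^sub>C v j)"
    by (simp add: sum.Int_Diff[OF \<open>finite F\<close>, of _ "{..<N}"])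
  moreover have "cinner (synthesis x N ?a) (\<Sum>j\<in>F - {..<N}. a j *\<^sub>C v j) = 0"
    by (simp add: cinner_sum_right cinner_scaleC_right
        cinner_cspan_orthonormal_eq_0[OF ons _ synthesis_in_cspan[OF x]])
  ultimately show ?thesis
    using \<open>finite F\<close> by (simp add: pythagoras norm_sum_orthonormal[OF ons])
qed

lemma analysis_completed_family_has_sum:
  fixes v x :: "nat \<Rightarrow> 'a::complex_inner"
  assumes onb: "orthonormal_basis v" and x: "\<And>i. i < N \<Longrightarrow> x i \<in> cspan (v ` {..<N})"
  shows "((\<lambda>j. (cmod (cinner f (if j < N then x j else v j)))\<^sup>2) has_sum
    (l2_sq N (\<lambda>j. cinner (proj_span v {..<N} f) (x j)) +
      ((norm f)\<^sup>2 - (norm (proj_span v {..<N} f))\<^sup>2))) UNIV"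
proof -
  let ?P = "proj_span v {..<N} f"
  let ?h = "\<lambda>j. (cmod (cinner f (if j < N then x j else v j)))\<^sup>2"
  have ons: "orthonormal v"
    using onb by (simp add: orthonormal_basis_iff)
  have "cinner f (x j) = cinner ?P (x j)" if "j < N" for j
    using cinner_proj_span_residual[OF ons _ x[OF that], of f] by (simp add: cinner_diff_left)
  then have head: "(?h has_sum l2_sq N (\<lambda>j. cinner ?P (x j))) {..<N}"
    by (intro has_sum_finiteI) (simp_all add: l2_sq_def)
  have "((\<lambda>j. (cmod (cinner f (v j)))\<^sup>2) has_sum ((norm f)\<^sup>2 - (norm ?P)\<^sup>2)) (UNIV - {..<N})"
    using has_sum_Diff[OF parseval[OF onb] has_sum_finite[of "{..<N}"]]
    by (simp add: norm_proj_span[OF ons])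
  moreover have "(?h has_sum ((norm f)\<^sup>2 - (norm ?P)\<^sup>2)) (UNIV - {..<N}) \<longleftrightarrow>
      ((\<lambda>j. (cmod (cinner f (v j)))\<^sup>2) has_sum ((norm f)\<^sup>2 - (norm ?P)\<^sup>2)) (UNIV - {..<N})"
    by (intro has_sum_cong) simp
  ultimately have tail: "(?h has_sum ((norm f)\<^sup>2 - (norm ?P)\<^sup>2)) (UNIV - {..<N})"
    by simp
  show ?thesis
    using has_sum_Un_disjoint[OF head tail] by simp
qed

lemma riesz_bounds_completed_family:
  fixes v x :: "nat \<Rightarrow> 'a::complex_inner"
  assumes onb: "orthonormal_basis v" and span: "cspan (x ` {..<N}) = cspan (v ` {..<N})"
    and lo: "\<And>d. m * l2_sq N d \<le> (norm (synthesis x N d))\<^sup>2"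
    and hi: "\<And>d. (norm (synthesis x N d))\<^sup>2 \<le> M * l2_sq N d"
    and "0 < m" "m \<le> 1" "m \<le> M"
  shows "riesz_bounds (\<lambda>j. if j < N then x j else v j) m (max M 1)"
proof -
  let ?u = "\<lambda>j. if j < N then x j else v j"
  have ons: "orthonormal v"
    using onb by (simp add: orthonormal_basis_iff)
  have x: "x i \<in> cspan (v ` {..<N})" if "i < N" for i
  proof -
    have "x i \<in> cspan (x ` {..<N})"
      using that unfolding cspan_eq_span by (intro cvec.span_base) simp
    then show ?thesis
      by (simp add: span)
  qed
  have analysis: "m * (norm f)\<^sup>2 \<le> (\<Sum>\<^sub>\<infinity>j. (cmod (cinner f (?u j)))\<^sup>2) \<and>
      (\<Sum>\<^sub>\<infinity>j. (cmod (cinner f (?u j)))\<^sup>2) \<le> max M 1 * (norm f)\<^sup>2" for f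
  proof -
    let ?g = "proj_span v {..<N} f"
    have "?g \<in> cspan (x ` {..<N})"
      unfolding span by (rule proj_span_in_cspan)
    then have "m * (norm ?g)\<^sup>2 \<le> l2_sq N (\<lambda>j. cinner ?g (x j))"
      by (rule l2_sq_analysis_ge[OF lo \<open>0 < m\<close>])
    moreover have "l2_sq N (\<lambda>j. cinner ?g (x j)) \<le> M * (norm ?g)\<^sup>2"
      using \<open>0 < m\<close> \<open>m \<le> M\<close> by (intro l2_sq_analysis_le[OF hi]) simp
    moreover have "(norm ?g)\<^sup>2 \<le> (norm f)\<^sup>2"
      using norm_proj_span_le[OF ons] by (simp add: power_mono)
    moreover have "(\<Sum>\<^sub>\<infinity>j. (cmod (cinner f (?u j)))\<^sup>2) =
        l2_sq N (\<lambda>j. cinner ?g (x j)) + ((norm f)\<^sup>2 - (norm ?g)\<^sup>2)"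
      by (rule infsumI) (rule analysis_completed_family_has_sum[OF onb x])
    ultimately show ?thesis
      using frame_bounds_add_isometric[of m "(norm ?g)\<^sup>2" _ M "(norm f)\<^sup>2 - (norm ?g)\<^sup>2"]
        \<open>0 < m\<close> \<open>m \<le> 1\<close>
      by simp
  qed
  have synthesis: "m * (\<Sum>j\<in>F. (cmod (a j))\<^sup>2) \<le> (norm (\<Sum>j\<in>F. a j *\<^sub>C ?u j))\<^sup>2 \<and>
      (norm (\<Sum>j\<in>F. a j *\<^sub>C ?u j))\<^sup>2 \<le> max M 1 * (\<Sum>j\<in>F. (cmod (a j))\<^sup>2)"
    if "finite F" for F a
  proof -
    let ?a = "\<lambda>j. if j \<in> F then a j else 0"
    have "(\<Sum>j\<in>F \<inter> {..<N}. (cmod (a j))\<^sup>2) = (\<Sum>j\<in>{..<N} \<inter> F. (cmod (a j))\<^sup>2)"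
      by (simp add: Int_commute)
    also have "\<dots> = l2_sq N ?a"
      by (simp add: sum.inter_restrict l2_sq_def if_distrib[of "\<lambda>z. (cmod z)\<^sup>2"] cong: if_cong)
    finally have head: "(\<Sum>j\<in>F \<inter> {..<N}. (cmod (a j))\<^sup>2) = l2_sq N ?a" .
    have "(\<Sum>j\<in>F. (cmod (a j))\<^sup>2) =
        (\<Sum>j\<in>F \<inter> {..<N}. (cmod (a j))\<^sup>2) + (\<Sum>j\<in>F - {..<N}. (cmod (a j))\<^sup>2)"
      by (rule sum.Int_Diff[OF \<open>finite F\<close>])
    then have "(\<Sum>j\<in>F. (cmod (a j))\<^sup>2) = l2_sq N ?a + (\<Sum>j\<in>F - {..<N}. (cmod (a j))\<^sup>2)"
      by (simp only: head)
    then show ?thesis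
      using frame_bounds_add_isometric[OF lo[of ?a] hi[of ?a] l2_sq_nonneg,
          where t = "\<Sum>j\<in>F - {..<N}. (cmod (a j))\<^sup>2"]
        \<open>0 < m\<close> \<open>m \<le> 1\<close> norm_sum_completed_family[OF ons x \<open>finite F\<close>, where a = a]
      by (simp add: sum_nonneg)
  qed
  show ?thesis
    unfolding riesz_bounds_def
    using \<open>0 < m\<close> \<open>m \<le> M\<close> analysis synthesis
      has_sum_imp_summable[OF analysis_completed_family_has_sum[OF onb x]]
    by auto
qed

lemma optimal_lower_constantI:
  assumes "riesz_bounds u A B" "finite F" "0 < (\<Sum>j\<in>F. (cmod (a j))\<^sup>2)"
    and "(norm (\<Sum>j\<in>F. a j *\<^sub>C u j))\<^sup>2 = A * (\<Sum>j\<in>F. (cmod (a j))\<^sup>2)"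
  shows "optimal_lower_constant u A"
  unfolding optimal_lower_constant_def
proof (intro conjI allI impI)
  fix A' B'
  assume "riesz_bounds u A' B'"
  then have "A' * (\<Sum>j\<in>F. (cmod (a j))\<^sup>2) \<le> (norm (\<Sum>j\<in>F. a j *\<^sub>C u j))\<^sup>2"
    using assms(2) unfolding riesz_bounds_def by blast
  then show "A' \<le> A"
    using assms(3,4) by (simp add: mult_le_cancel_right_pos)
qed (use assms(1) in blast)

lemma optimal_upper_constantI:
  assumes "riesz_bounds u A B" "finite F" "0 < (\<Sum>j\<in>F. (cmod (a j))\<^sup>2)"
    and "(norm (\<Sum>j\<in>F. a j *\<^sub>C u j))\<^sup>2 = B * (\<Sum>j\<in>F. (cmod (a j))\<^sup>2)"
  shows "optimal_upper_constant u B"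
  unfolding optimal_upper_constant_def
proof (intro conjI allI impI)
  fix A' B'
  assume "riesz_bounds u A' B'"
  then have "(norm (\<Sum>j\<in>F. a j *\<^sub>C u j))\<^sup>2 \<le> B' * (\<Sum>j\<in>F. (cmod (a j))\<^sup>2)"
    using assms(2) unfolding riesz_bounds_def by blast
  then show "B \<le> B'"
    using assms(3,4) by (simp add: mult_le_cancel_right_pos)
qed (use assms(1) in blast)

lemma optimal_constants_completed_family:
  fixes v x :: "nat \<Rightarrow> 'a::complex_inner"
  assumes onb: "orthonormal_basis v" and span: "cspan (x ` {..<N}) = cspan (v ` {..<N})"
    and lo: "\<And>d. m * l2_sq N d \<le> (norm (synthesis x N d))\<^sup>2"
    and hi: "\<And>d. (norm (synthesis x N d))\<^sup>2 \<le> M * l2_sq N d"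
    and "0 < m" "m \<le> 1"
    and d0: "l2_sq N d0 = 1" "(norm (synthesis x N d0))\<^sup>2 = m"
    and d1: "l2_sq N d1 = 1" "(norm (synthesis x N d1))\<^sup>2 = M"
  defines "u \<equiv> \<lambda>j. if j < N then x j else v j"
  shows "optimal_lower_constant u m" and "optimal_upper_constant u (max M 1)"
proof -
  have "m \<le> M"
    using lo[of d1] d1 by simp
  then have RB: "riesz_bounds u m (max M 1)"
    unfolding u_def using riesz_bounds_completed_family[OF onb span lo hi] \<open>0 < m\<close> \<open>m \<le> 1\<close>
    by blast
  have head: "(\<Sum>j<N. a j *\<^sub>C u j) = synthesis x N a" for a
    by (simp add: u_def synthesis_def)
  show "optimal_lower_constant u m"
    by (rule optimal_lower_constantI[OF RB, where F = "{..<N}" and a = d0])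
      (simp_all add: head d0 flip: l2_sq_def)
  show "optimal_upper_constant u (max M 1)"
  proof (cases "1 \<le> M")
    case True
    then show ?thesis
      by (intro optimal_upper_constantI[OF RB, where F = "{..<N}" and a = d1])
        (simp_all add: head d1 flip: l2_sq_def)
  next
    case False
    moreover have "(norm (v N))\<^sup>2 = 1"
      using onb by (simp add: power2_norm_eq_cinner orthonormal_basis_iff orthonormal_def)
    ultimately show ?thesis
      by (intro optimal_upper_constantI[OF RB, where F = "{N}" and a = "\<lambda>_. 1"])
        (simp_all add: u_def)
  qed
qed

lemma gram_form_range:
  fixes x :: "nat \<Rightarrow> 'a::complex_inner"
  assumes lo: "\<And>d. m * l2_sq n d \<le> (norm (synthesis x n d))\<^sup>2"
    and hi: "\<And>d. (norm (synthesis x n d))\<^sup>2 \<le> M * l2_sq n d"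
    and "0 \<le> m" "m \<le> 1"
    and d0: "l2_sq n d0 = 1" "(norm (synthesis x n d0))\<^sup>2 = m"
    and d1: "l2_sq n d1 = 1" "(norm (synthesis x n d1))\<^sup>2 = M"
  defines "S \<equiv> (\<lambda>c. Re ((gram_mat x n *\<^sub>v c) \<bullet>c c) + 1 - (\<Sum>i<n. (cmod (c $ i))\<^sup>2)) `
    {c \<in> carrier_vec n. (\<Sum>i<n. (cmod (c $ i))\<^sup>2) \<le> 1}"
  shows "m \<in> S" and "max M 1 \<in> S" and "\<And>y. y \<in> S \<Longrightarrow> m \<le> y \<and> y \<le> max M 1"
proof -
  have S: "S = (\<lambda>d. (norm (synthesis x n d))\<^sup>2 + 1 - l2_sq n d) ` {d. l2_sq n d \<le> 1}"
  proof (intro equalityI subsetI)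
    fix y
    assume "y \<in> S"
    then obtain c where "c \<in> carrier_vec n" "(\<Sum>i<n. (cmod (c $ i))\<^sup>2) \<le> 1"
      "y = Re ((gram_mat x n *\<^sub>v c) \<bullet>c c) + 1 - (\<Sum>i<n. (cmod (c $ i))\<^sup>2)"
      unfolding S_def by blast
    then show "y \<in> (\<lambda>d. (norm (synthesis x n d))\<^sup>2 + 1 - l2_sq n d) ` {d. l2_sq n d \<le> 1}"
      by (intro image_eqI[of _ _ "\<lambda>i. cnj (c $ i)"])
        (simp_all add: gram_mat_cscalar_prod power2_norm_eq_cinner l2_sq_def)
  next
    fix y
    assume "y \<in> (\<lambda>d. (norm (synthesis x n d))\<^sup>2 + 1 - l2_sq n d) ` {d. l2_sq n d \<le> 1}"
    then obtain d where d: "l2_sq n d \<le> 1" "y = (norm (synthesis x n d))\<^sup>2 + 1 - l2_sq n d"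
      by blast
    let ?c = "vec n (\<lambda>i. cnj (d i))"
    have "synthesis x n (\<lambda>i. cnj (?c $ i)) = synthesis x n d"
      by (auto intro: synthesis_cong)
    moreover have "(\<Sum>i<n. (cmod (?c $ i))\<^sup>2) = l2_sq n d"
      by (simp add: l2_sq_def)
    ultimately show "y \<in> S"
      unfolding S_def using d
      by (intro image_eqI[of _ _ ?c]) (simp_all add: gram_mat_cscalar_prod power2_norm_eq_cinner)
  qed
  show "m \<in> S"
    unfolding S using d0 by (intro image_eqI[of _ _ d0]) simp_all
  show "max M 1 \<in> S"
  proof (cases "1 \<le> M")
    case True
    then show ?thesis
      unfolding S using d1 by (intro image_eqI[of _ _ d1]) simp_all
  next
    case False
    have "synthesis x n (\<lambda>_. 0) = 0" "l2_sq n (\<lambda>_. 0) = 0"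
      by (simp_all add: synthesis_def l2_sq_def)
    with False show ?thesis
      unfolding S by (intro image_eqI[of _ _ "\<lambda>_. 0"]) simp_all
  qed
  show "m \<le> y \<and> y \<le> max M 1" if "y \<in> S" for y
  proof -
    obtain d where "l2_sq n d \<le> 1" "y = (norm (synthesis x n d))\<^sup>2 + 1 - l2_sq n d"
      using \<open>y \<in> S\<close> unfolding S by blast
    then show ?thesis
      using frame_bounds_add_isometric[OF lo hi l2_sq_nonneg, of "1 - l2_sq n d" d] assms(3,4)
      by simp
  qed
qed

theorem mainTheorem5:
  fixes v w :: "nat \<Rightarrow> 'a::chilbert_space" and N :: nat
    and p :: "'a \<Rightarrow> 'a" and u :: "nat \<Rightarrow> 'a" and U :: "complex mat"
    and Q :: "complex vec \<Rightarrow> real" and S :: "real set"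
  assumes N: "N \<ge> 1"
    and onb: "orthonormal_basis v"
    and unit: "\<And>j. norm (w j) = 1"
    and p_def: "p = orth_proj (cspan (v ` {..<N}))"
    and basis: "is_finite_basis_of N (\<lambda>i. p (w i)) (cspan (v ` {..<N}))"
    and u_def: "u = (\<lambda>j. if j < N then p (w j) else v j)"
    and U_def: "U = mat N N (\<lambda>(i, j). cinner (p (w i)) (p (w j)))"
    and Q_def: "Q = (\<lambda>c. Re ((U *\<^sub>v c) \<bullet>c c) + 1 - (\<Sum>i<N. (cmod (c $ i))\<^sup>2))"
    and S_def: "S = Q ` {c \<in> carrier_vec N. (\<Sum>i<N. (cmod (c $ i))\<^sup>2) \<le> 1}"
  shows "riesz_basis u \<and>
    (\<exists>At Bt. optimal_lower_constant u At \<and> optimal_upper_constant u Bt \<and>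
       Bt \<in> S \<and> (\<forall>x\<in>S. x \<le> Bt) \<and> At \<in> S \<and> (\<forall>x\<in>S. At \<le> x) \<and>
       (\<exists>LamN lamN::real. eigenvalue U (complex_of_real LamN) \<and> eigenvalue U (complex_of_real lamN) \<and>
          (\<forall>\<mu>. eigenvalue U \<mu> \<longrightarrow> \<mu> \<in> \<real> \<and> lamN \<le> Re \<mu> \<and> Re \<mu> \<le> LamN) \<and>
          Bt = max LamN 1 \<and> At = lamN))"
proof -
  have ons: "orthonormal v"
    using onb by (simp add: orthonormal_basis_iff)
  define x where "x = (\<lambda>i. p (w i))"
  have U: "U = gram_mat x N" and u: "u = (\<lambda>j. if j < N then x j else v j)"
    unfolding U_def u_def gram_mat_def x_def by (rule refl)+
  have span: "cspan (x ` {..<N}) = cspan (v ` {..<N})"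
    and indep: "\<And>a. synthesis x N a = 0 \<Longrightarrow> l2_sq N a = 0"
    using basis by (auto simp: is_finite_basis_of_def x_def synthesis_def l2_sq_eq_0_iff)
  obtain m M d0 d1 where d0: "l2_sq N d0 = 1" "(norm (synthesis x N d0))\<^sup>2 = m"
    and d1: "l2_sq N d1 = 1" "(norm (synthesis x N d1))\<^sup>2 = M"
    and lo: "\<And>d. m * l2_sq N d \<le> (norm (synthesis x N d))\<^sup>2"
    and hi: "\<And>d. (norm (synthesis x N d))\<^sup>2 \<le> M * l2_sq N d"
    and eig: "eigenvalue U (of_real m)" "eigenvalue U (of_real M)"
      "\<And>\<mu>. eigenvalue U \<mu> \<Longrightarrow> \<mu> \<in> \<real> \<and> m \<le> Re \<mu> \<and> Re \<mu> \<le> M"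
    unfolding U by (rule gram_mat_rayleigh_ritz[OF N, where x = x]) blast
  have "synthesis x N d0 \<noteq> 0"
    using indep[of d0] d0(1) by auto
  with d0(2) have "0 < m"
    by auto
  have "m \<le> (norm (x 0))\<^sup>2"
    using synthesis_lower_bound_le_power2_norm[OF lo] N by simp
  also have "\<dots> \<le> 1"
    using norm_proj_span_le[OF ons finite_lessThan, where x = "w 0"] unit[of 0]
    by (simp add: x_def p_def orth_proj_cspan_orthonormal[OF ons] power_le_one)
  finally have "m \<le> 1" .
  have "optimal_lower_constant u m" "optimal_upper_constant u (max M 1)"
    using optimal_constants_completed_family[OF onb span lo hi \<open>0 < m\<close> \<open>m \<le> 1\<close> d0 d1]
    unfolding u by auto
  moreover have "m \<in> S" "max M 1 \<in> S" "\<forall>y\<in>S. m \<le> y \<and> y \<le> max M 1"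
    using gram_form_range[OF lo hi _ \<open>m \<le> 1\<close> d0 d1] \<open>0 < m\<close> unfolding S_def Q_def U by auto
  moreover have "riesz_basis u"
    using \<open>optimal_lower_constant u m\<close> by (auto simp: optimal_lower_constant_def riesz_basis_def)
  ultimately show ?thesis
    using eig by blast
qed

end
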